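(* Let $n,d\ge 2$, and let $0\le a<b\le d$. Let $\boldsymbol\gamma_a\in\mathbb{R}^{\binom{n+a-1}{a}}$ and $\boldsymbol\gamma_b\in\mathbb{R}^{\binom{n+b-1}{b}}$ be nonnegative vectors with $R(\boldsymbol\gamma_a)=R(\boldsymbol\gamma_b)=1$, and set $$\mathbf v=(-1)^{d-a}J_{n,d}J_{n,d-1}\cdots J_{n,a}\boldsymbol\gamma_a+(-1)^{d-b}J_{n,d}J_{n,d-1}\cdots J_{n,b}\boldsymbol\gamma_b.$$ If $\mathbf v\ge 0$, then $R(\mathbf v)\ge \binom{n+2}{3}-1$.
   Context: For a real vector $\mathbf x$, $R(\mathbf x)$ is the number of nonzero components; inequalities are componentwise. For $j\ge 0$, $J_{n,j}$ is the matrix, with respect to the left lexicographic bases of degree-$j$ and degree-$(j+1)$ monomials in $x_1,\dots,x_n$, of the linear map $A(x)\mapsto A(x)(x_1+\cdots+x_n)$; so $J_{n,d}\cdots J_{n,a}\boldsymbol\gamma$ is the coefficient vector of $G(x)(x_1+\cdots+x_n)^{d-a+1}$ where $G$ has coefficient vector $\boldsymbol\gamma$. *)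

theory Defs
  imports Complex_Main
begin

(* Monomials of degree j in x_1..x_n, as exponent vectors alpha (x_{i+1} has exponent alpha i),
  indices i < n, zero beyond n. *)
definition monoms :: "nat \<Rightarrow> nat \<Rightarrow> (nat \<Rightarrow> nat) set" where
  "monoms n j = {\<alpha>. (\<forall>i\<ge>n. \<alpha> i = 0) \<and> (\<Sum>i<n. \<alpha> i) = j}"

(* A coefficient vector of degree j: a real function on exponent vectors supported on monoms n j
  (the coordinates of a vector in R^(n+j-1 choose j) w.r.t. the monomial basis). *)
definition is_coeffvec :: "nat \<Rightarrow> nat \<Rightarrow> ((nat \<Rightarrow> nat) \<Rightarrow> real) \<Rightarrow> bool" where
  "is_coeffvec n j g \<longleftrightarrow> (\<forall>\<alpha>. \<alpha> \<notin> monoms n j \<longrightarrow> g \<alpha> = 0)"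

(* The map J_{n,j}: A(x) maps to A(x)(x_1+...+x_n), on coefficient vectors. *)
definition Jmul :: "nat \<Rightarrow> ((nat \<Rightarrow> nat) \<Rightarrow> real) \<Rightarrow> ((nat \<Rightarrow> nat) \<Rightarrow> real)" where
  "Jmul n g = (\<lambda>\<alpha>. \<Sum>i\<in>{i. i < n \<and> 0 < \<alpha> i}. g (\<alpha>(i := \<alpha> i - 1)))"

definition Rnz :: "nat \<Rightarrow> nat \<Rightarrow> ((nat \<Rightarrow> nat) \<Rightarrow> real) \<Rightarrow> nat" where
  "Rnz n j g = card {\<alpha> \<in> monoms n j. g \<alpha> \<noteq> 0}"

end

theory Submission
  imports Defs
begin

(* Write v = s A + t B with A = J^p (c x^\<alpha>), B = J^q (c' x^\<beta>), p = d - a + 1, q = d - b + 1.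
  The support of A in degree d + 1 is the set of multiples of x^\<alpha>, of size C(n + p - 1, p),
  and similarly for B.  If s = t, then v vanishes nowhere on supp A.  Otherwise, testing v at a
  multiple of one monomial that is not a multiple of the other shows s = 1, t = -1 and x^\<alpha> | x^\<beta>,
  so v > 0 on supp A - supp B; this suffices when b - a \<ge> 3.  When b = a + 1, so x^\<beta> = x^\<alpha> x_j,
  write v = J^q (J (c x^\<alpha>) - c' x^\<beta>): the value of v at x^\<alpha> x_j^p shows that the inner vector
  is nonnegative, and then v vanishes on supp A at most at x^\<alpha> x_j^p. *)

lemma bij_betw_lists_monoms:
  "bij_betw (\<lambda>l i. if i < n then l ! i else 0) {l. length l = n \<and> sum_list l = j} (monoms n j)"
proof (rule bij_betw_byWitness[where f' = "\<lambda>\<alpha>. map \<alpha> [0..<n]"])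
  show "(\<lambda>l i. if i < n then l ! i else 0) ` {l. length l = n \<and> sum_list l = j} \<subseteq> monoms n j"
    by (auto simp: monoms_def sum_list_sum_nth atLeast0LessThan)
  show "(\<lambda>\<alpha>. map \<alpha> [0..<n]) ` monoms n j \<subseteq> {l. length l = n \<and> sum_list l = j}"
    by (auto simp: monoms_def sum_list_sum_nth atLeast0LessThan)
qed (auto simp: monoms_def fun_eq_iff intro: nth_equalityI)

lemma finite_monoms: "finite (monoms n j)"
proof -
  have "{l. length l = n \<and> sum_list l = j} \<subseteq> {l. set l \<subseteq> {..j} \<and> length l = n}"
    using member_le_sum_list by fastforce
  then have "finite {l::nat list. length l = n \<and> sum_list l = j}"
    using finite_lists_length_eq[of "{..j}" n] finite_subset by blast
  then show ?thesis
    using bij_betw_finite[OF bij_betw_lists_monoms] by blast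
qed

lemma card_monoms: "card (monoms n j) = (j + n - 1) choose j"
  using bij_betw_same_card[OF bij_betw_lists_monoms] card_length_sum_list by metis

lemma sum_less_imp_ex_less:
  fixes \<alpha> \<beta> :: "nat \<Rightarrow> nat"
  assumes "(\<Sum>i<n. \<alpha> i) < (\<Sum>i<n. \<beta> i)"
  shows "\<exists>i<n. \<alpha> i < \<beta> i"
  using sum_mono[of "{..<n}" \<beta> \<alpha>] assms by (meson lessThan_iff not_le)

lemma monoms_upd_add:
  assumes "\<alpha> \<in> monoms n a" "i < n"
  shows "\<alpha>(i := \<alpha> i + p) \<in> monoms n (a + p)"
proof -
  have "(\<Sum>k<n. (\<alpha>(i := \<alpha> i + p)) k) = (\<Sum>k<n. \<alpha> k + (if k = i then p else 0))"
    by (intro sum.cong) auto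
  also have "\<dots> = a + p"
    using assms by (simp add: sum.distrib monoms_def)
  finally show ?thesis
    using assms by (auto simp: monoms_def)
qed

lemma monoms_upd_diff:
  assumes "\<gamma> \<in> monoms n (Suc q)" "i < n" "0 < \<gamma> i"
  shows "\<gamma>(i := \<gamma> i - 1) \<in> monoms n q"
proof -
  have "(\<Sum>k<n. \<gamma> k) = (\<Sum>k<n. (\<gamma>(i := \<gamma> i - 1)) k + (if k = i then 1 else 0))"
    using assms(3) by (intro sum.cong) auto
  then show ?thesis
    using assms by (auto simp: monoms_def sum.distrib)
qed

lemma monoms_le_imp_eq:
  assumes "\<delta> \<in> monoms n j" "\<gamma> \<in> monoms n j" "\<delta> \<le> \<gamma>"
  shows "\<delta> = \<gamma>"
proof (rule ccontr)
  assume "\<delta> \<noteq> \<gamma>"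
  then obtain i where "\<delta> i \<noteq> \<gamma> i"
    by blast
  with assms(3) have i: "\<delta> i < \<gamma> i"
    by (simp add: le_fun_def order_less_le)
  have "i < n"
    using assms(2) i by (cases "i < n") (auto simp: monoms_def)
  then have "(\<Sum>i<n. \<delta> i) < (\<Sum>i<n. \<gamma> i)"
    using i assms(3) by (intro sum_strict_mono_ex1) (auto simp: le_fun_def)
  then show False
    using assms(1,2) by (simp add: monoms_def)
qed

lemma monoms_eq_if_eq_off:
  assumes "\<gamma> \<in> monoms n q" "\<gamma>' \<in> monoms n q" "\<And>i. i \<noteq> j \<Longrightarrow> \<gamma> i = \<gamma>' i"
  shows "\<gamma> = \<gamma>'"
proof (cases "j < n")
  case True
  have "\<gamma> j + (\<Sum>i\<in>{..<n} - {j}. \<gamma> i) = \<gamma>' j + (\<Sum>i\<in>{..<n} - {j}. \<gamma>' i)"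
    using assms(1,2) True by (simp add: monoms_def sum.remove[symmetric])
  moreover have "(\<Sum>i\<in>{..<n} - {j}. \<gamma> i) = (\<Sum>i\<in>{..<n} - {j}. \<gamma>' i)"
    using assms(3) by (intro sum.cong) auto
  ultimately show ?thesis
    using assms(3) by (metis add_right_cancel ext)
next
  case False
  show ?thesis
  proof
    fix i
    show "\<gamma> i = \<gamma>' i"
      using assms False by (cases "i = j") (auto simp: monoms_def)
  qed
qed

lemma not_le_if_degree_less:
  assumes "\<alpha> \<in> monoms n a" "\<beta> \<in> monoms n b" "a < b"
  shows "\<not> \<beta> \<le> \<alpha>"
  using assms sum_mono[of "{..<n}" \<beta> \<alpha>] by (auto simp: monoms_def le_fun_def)

lemma exists_above_not_above:
  assumes "n \<ge> 2" "\<alpha> \<in> monoms n a" "\<beta> \<in> monoms n b" "\<not> \<beta> \<le> \<alpha>"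
  obtains \<gamma> where "\<gamma> \<in> monoms n (a + p)" "\<alpha> \<le> \<gamma>" "\<not> \<beta> \<le> \<gamma>"
proof -
  obtain j where j: "\<alpha> j < \<beta> j"
    using assms(4) by (auto simp: le_fun_def not_le)
  then have "j < n"
    using assms(3) by (cases "j < n") (auto simp: monoms_def)
  define i :: nat where "i = (if j = 0 then 1 else 0)"
  have "i < n" "i \<noteq> j"
    using assms(1) by (auto simp: i_def)
  have "\<alpha> \<le> \<alpha>(i := \<alpha> i + p)"
    by (simp add: le_fun_def)
  moreover have "\<not> \<beta> \<le> \<alpha>(i := \<alpha> i + p)"
    unfolding le_fun_def using j \<open>i \<noteq> j\<close> by (metis fun_upd_other not_le)
  ultimately show thesis
    using that monoms_upd_add[OF assms(2) \<open>i < n\<close>] by blast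
qed

lemma monoms_exists_coord_gt_off:
  assumes "\<alpha> \<le> \<gamma>" "\<gamma> \<in> monoms n q" "\<alpha>(j := \<alpha> j + r) \<in> monoms n q"
    and "\<gamma> \<noteq> \<alpha>(j := \<alpha> j + r)"
  obtains i where "i < n" "i \<noteq> j" "\<alpha> i < \<gamma> i"
proof -
  have "\<exists>i<n. i \<noteq> j \<and> \<alpha> i < \<gamma> i"
  proof (rule ccontr)
    assume none: "\<not> (\<exists>i<n. i \<noteq> j \<and> \<alpha> i < \<gamma> i)"
    have "\<gamma> i = \<alpha> i" if "i \<noteq> j" for i
    proof (cases "i < n")
      case True
      then show ?thesis
        using none that le_funD[OF assms(1), of i] by (meson antisym not_less)
    next
      case False
      then show ?thesis
        using assms(2) le_funD[OF assms(1), of i] by (simp add: monoms_def)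
    qed
    then have "\<gamma> = \<alpha>(j := \<alpha> j + r)"
      using monoms_eq_if_eq_off[OF assms(2,3), of j] by simp
    with assms(4) show False ..
  qed
  then show thesis
    using that by blast
qed

lemma monoms_le_Suc_eq_upd:
  assumes "\<alpha> \<in> monoms n a" "\<beta> \<in> monoms n (Suc a)" "\<alpha> \<le> \<beta>"
  obtains j where "j < n" "\<beta> = \<alpha>(j := \<alpha> j + 1)"
proof -
  obtain j where j: "j < n" "\<alpha> j < \<beta> j"
    using sum_less_imp_ex_less[of \<alpha> n \<beta>] assms(1,2) by (auto simp: monoms_def)
  then have "\<alpha>(j := \<alpha> j + 1) \<le> \<beta>"
    using assms(3) by (auto simp: le_fun_def)
  moreover have "\<alpha>(j := \<alpha> j + 1) \<in> monoms n (Suc a)"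
    using monoms_upd_add[OF assms(1) j(1), of 1] by simp
  ultimately have "\<alpha>(j := \<alpha> j + 1) = \<beta>"
    using monoms_le_imp_eq assms(2) by blast
  then show thesis
    using that j(1) by simp
qed

lemma card_monoms_above:
  assumes "\<alpha> \<in> monoms n a"
  shows "card {\<gamma> \<in> monoms n (a + p). \<alpha> \<le> \<gamma>} = card (monoms n p)"
proof -
  have "bij_betw (\<lambda>\<nu> i. \<alpha> i + \<nu> i) (monoms n p) {\<gamma> \<in> monoms n (a + p). \<alpha> \<le> \<gamma>}"
  proof (rule bij_betw_byWitness[where f' = "\<lambda>\<gamma> i. \<gamma> i - \<alpha> i"])
    show "(\<lambda>\<nu> i. \<alpha> i + \<nu> i) ` monoms n p \<subseteq> {\<gamma> \<in> monoms n (a + p). \<alpha> \<le> \<gamma>}"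
      using assms by (auto simp: monoms_def le_fun_def sum.distrib)
    show "(\<lambda>\<gamma> i. \<gamma> i - \<alpha> i) ` {\<gamma> \<in> monoms n (a + p). \<alpha> \<le> \<gamma>} \<subseteq> monoms n p"
    proof clarify
      fix \<gamma> assume "\<gamma> \<in> monoms n (a + p)" "\<alpha> \<le> \<gamma>"
      then show "(\<lambda>i. \<gamma> i - \<alpha> i) \<in> monoms n p"
        using assms by (auto simp: monoms_def le_fun_def sum_subtractf_nat)
    qed
  qed (auto simp: le_fun_def)
  then show ?thesis
    by (simp add: bij_betw_same_card)
qed

lemma card_monoms_gap:
  assumes "n \<ge> 2" "m + 3 \<le> q"
  shows "card (monoms n m) + card (monoms n 3) \<le> card (monoms n q) + 1"
proof -
  (* X = {\<gamma> \<ge> (q - m) e_0} and Y = (q - 3) e_1 + (cubic exponents other than 3 e_0);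
    the exponent at index 0 separates them. *)
  define X where "X = {\<gamma> \<in> monoms n (q - m + m). (\<lambda>_. 0)(0 := q - m) \<le> \<gamma>}"
  define Z where "Z = {\<mu> \<in> monoms n (3 + 0). (\<lambda>_. 0)(0 := 3) \<le> \<mu>}"
  define Y where "Y = (\<lambda>\<mu>. \<mu>(1 := \<mu> 1 + (q - 3))) ` (monoms n 3 - Z)"
  have "(\<lambda>_. 0)(0 := k) \<in> monoms n k" for k
    using monoms_upd_add[of "\<lambda>_. 0" n 0 0 k] assms(1) by (simp add: monoms_def)
  then have cX: "card X = card (monoms n m)" and cZ: "card Z = 1"
    unfolding X_def Z_def by (simp_all only: card_monoms_above) (simp add: card_monoms)
  have "inj_on (\<lambda>\<mu>. \<mu>(1 := \<mu> 1 + (q - 3))) (monoms n 3 - Z)"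
    by (rule inj_onI) (metis add_right_cancel fun_upd_idem_iff fun_upd_upd)
  moreover have "Z \<subseteq> monoms n 3"
    by (auto simp: Z_def)
  ultimately have cY: "card Y = card (monoms n 3) - 1"
    using cZ card_Diff_subset[OF finite_subset[OF _ finite_monoms]] by (simp add: Y_def card_image)
  have "X \<subseteq> monoms n q"
    using assms(2) by (auto simp: X_def)
  moreover have "Y \<subseteq> monoms n q"
    using monoms_upd_add[of _ n 3 1 "q - 3"] assms by (auto simp: Y_def)
  moreover have "X \<inter> Y = {}"
  proof -
    have "\<gamma> 0 < 3" if "\<gamma> \<in> Y" for \<gamma>
      using that by (auto simp: Y_def Z_def le_fun_def)
    moreover have "3 \<le> \<gamma> 0" if "\<gamma> \<in> X" for \<gamma>
      using that assms(2) by (auto simp: X_def le_fun_def dest: spec[of _ 0])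
    ultimately show ?thesis
      by (meson disjoint_iff not_le)
  qed
  ultimately have "card X + card Y \<le> card (monoms n q)"
    by (metis card_Un_disjoint card_mono finite_monoms finite_subset le_sup_iff)
  then show ?thesis
    using cX cY by simp
qed

lemma card_monoms_three_le:
  assumes "n \<ge> 2" "3 \<le> q"
  shows "card (monoms n 3) \<le> card (monoms n q)"
  using card_monoms_gap[of n 0 q] assms by (simp add: card_monoms)

lemma Rnz_ge_card:
  assumes "S \<subseteq> monoms n q" "\<And>\<gamma>. \<gamma> \<in> S \<Longrightarrow> v \<gamma> \<noteq> 0"
  shows "card S \<le> Rnz n q v"
  unfolding Rnz_def using assms by (intro card_mono) (auto intro: finite_subset[OF _ finite_monoms])

lemma Jpow_nonneg:
  assumes "\<And>\<gamma>. 0 \<le> f \<gamma>"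
  shows "0 \<le> (Jmul n ^^ p) f \<gamma>"
proof (induction p arbitrary: \<gamma>)
  case (Suc p)
  then show ?case
    by (simp add: Jmul_def sum_nonneg)
qed (simp add: assms)

lemma Jmul_ge:
  assumes "\<And>\<gamma>. 0 \<le> f \<gamma>" "i < n" "0 < \<gamma> i"
  shows "f (\<gamma>(i := \<gamma> i - 1)) \<le> Jmul n f \<gamma>"
  unfolding Jmul_def using assms
  by (intro member_le_sum[where f = "\<lambda>i. f (\<gamma>(i := \<gamma> i - 1))"]) auto

lemma Jpow_diff:
  "(Jmul n ^^ p) (\<lambda>\<gamma>. f \<gamma> - g \<gamma>) = (\<lambda>\<gamma>. (Jmul n ^^ p) f \<gamma> - (Jmul n ^^ p) g \<gamma>)"
  by (induction p) (simp_all add: Jmul_def sum_subtractf)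

lemma Jpow_scale:
  "(Jmul n ^^ p) (\<lambda>\<gamma>. c * f \<gamma>) = (\<lambda>\<gamma>. c * (Jmul n ^^ p) f \<gamma>)"
  by (induction p) (simp_all add: Jmul_def sum_distrib_left)

lemma Jpow_zero: "(Jmul n ^^ p) (\<lambda>_. 0) = (\<lambda>_. 0)"
  by (induction p) (simp_all add: Jmul_def)

lemma Jpow_cong_below:
  assumes "\<And>\<delta>. \<delta> \<le> \<gamma> \<Longrightarrow> f \<delta> = g \<delta>"
  shows "(Jmul n ^^ p) f \<gamma> = (Jmul n ^^ p) g \<gamma>"
  using assms
proof (induction p arbitrary: \<gamma>)
  case (Suc p)
  have "(Jmul n ^^ p) f (\<gamma>(i := \<gamma> i - 1)) = (Jmul n ^^ p) g (\<gamma>(i := \<gamma> i - 1))" for i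
    using Suc by (metis (no_types, lifting) order_trans fun_upd_apply le_funI diff_le_self order_refl)
  then show ?case
    unfolding funpow.simps comp_apply
      Jmul_def[of n "(Jmul n ^^ p) f"] Jmul_def[of n "(Jmul n ^^ p) g"]
    by (intro sum.cong) simp_all
qed simp

lemma Jpow_eq_0_if_below:
  assumes "\<And>\<delta>. \<delta> \<le> \<gamma> \<Longrightarrow> f \<delta> = 0"
  shows "(Jmul n ^^ p) f \<gamma> = 0"
  using Jpow_cong_below[where g = "\<lambda>_. 0"] assms by (simp add: Jpow_zero)

lemma Jpow_pos:
  assumes "\<And>\<gamma>. 0 \<le> f \<gamma>" "\<delta> \<in> monoms n j" "0 < f \<delta>"
    and "\<gamma> \<in> monoms n (j + p)" "\<delta> \<le> \<gamma>"
  shows "0 < (Jmul n ^^ p) f \<gamma>"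
  using assms(4,5)
proof (induction p arbitrary: \<gamma>)
  case 0
  then have "\<delta> = \<gamma>"
    using monoms_le_imp_eq[OF assms(2), of \<gamma>] by simp
  with assms(3) show ?case
    by simp
next
  case (Suc p)
  obtain i where i: "i < n" "\<delta> i < \<gamma> i"
    using sum_less_imp_ex_less[of \<delta> n \<gamma>] assms(2) Suc.prems(1) by (auto simp: monoms_def)
  then have "\<gamma>(i := \<gamma> i - 1) \<in> monoms n (j + p)" "\<delta> \<le> \<gamma>(i := \<gamma> i - 1)"
    using monoms_upd_diff[of \<gamma> n "j + p" i] Suc.prems by (auto simp: le_fun_def)
  then have "0 < (Jmul n ^^ p) f (\<gamma>(i := \<gamma> i - 1))"
    using Suc.IH by blast
  also have "\<dots> \<le> (Jmul n ^^ Suc p) f \<gamma>"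
    using Jmul_ge[where f = "(Jmul n ^^ p) f"] Jpow_nonneg[OF assms(1)] i by simp
  finally show ?case .
qed

definition monom_vec :: "(nat \<Rightarrow> nat) \<Rightarrow> real \<Rightarrow> (nat \<Rightarrow> nat) \<Rightarrow> real" where
  "monom_vec \<alpha> c = (\<lambda>\<gamma>. if \<gamma> = \<alpha> then c else 0)"

lemma monom_vec_scale: "monom_vec \<alpha> c = (\<lambda>\<gamma>. c * monom_vec \<alpha> 1 \<gamma>)"
  by (simp add: monom_vec_def fun_eq_iff)

lemma coeffvec_eq_monom_vec:
  assumes "is_coeffvec n a g" "\<forall>\<alpha>. 0 \<le> g \<alpha>" "Rnz n a g = 1"
  obtains \<alpha> c where "\<alpha> \<in> monoms n a" "0 < c" "g = monom_vec \<alpha> c"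
proof -
  obtain \<alpha> where \<alpha>: "{\<alpha> \<in> monoms n a. g \<alpha> \<noteq> 0} = {\<alpha>}"
    using assms(3) unfolding Rnz_def by (rule card_1_singletonE)
  then have "g = monom_vec \<alpha> (g \<alpha>)"
    using assms(1) by (auto simp: monom_vec_def is_coeffvec_def fun_eq_iff)
  moreover have "\<alpha> \<in> monoms n a" "0 < g \<alpha>"
    using \<alpha> assms(2) by (auto simp: order_less_le)
  ultimately show thesis
    using that by blast
qed

lemma Jpow_monom_vec_pos:
  assumes "\<alpha> \<in> monoms n a" "0 < c" "\<gamma> \<in> monoms n (a + p)" "\<alpha> \<le> \<gamma>"
  shows "0 < (Jmul n ^^ p) (monom_vec \<alpha> c) \<gamma>"
  using assms by (intro Jpow_pos[of _ \<alpha> n a]) (auto simp: monom_vec_def)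

lemma Jpow_monom_vec_eq_0:
  assumes "\<not> \<alpha> \<le> \<gamma>"
  shows "(Jmul n ^^ p) (monom_vec \<alpha> c) \<gamma> = 0"
  using assms by (intro Jpow_eq_0_if_below) (auto simp: monom_vec_def)

lemma Jmul_monom_vec_neq_0:
  assumes "Jmul n (monom_vec \<alpha> c) \<delta> \<noteq> 0"
  shows "\<exists>i<n. \<delta> = \<alpha>(i := \<alpha> i + 1)"
proof -
  obtain i where "i < n" "0 < \<delta> i" "monom_vec \<alpha> c (\<delta>(i := \<delta> i - 1)) \<noteq> 0"
    using assms unfolding Jmul_def by (metis (no_types, lifting) mem_Collect_eq sum.neutral)
  then have "i < n" "\<delta> = \<alpha>(i := \<alpha> i + 1)"
    by (auto simp: monom_vec_def fun_eq_iff split: if_splits)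
  then show ?thesis
    by blast
qed

lemma le_if_Jpow_monom_vec_dominates:
  assumes "n \<ge> 2" "\<alpha> \<in> monoms n a" "\<beta> \<in> monoms n b" "0 < c'" "a + p = b + q"
    and "\<forall>\<gamma> \<in> monoms n (a + p).
           (Jmul n ^^ q) (monom_vec \<beta> c') \<gamma> \<le> (Jmul n ^^ p) (monom_vec \<alpha> c) \<gamma>"
  shows "\<alpha> \<le> \<beta>"
proof (rule ccontr)
  assume "\<not> \<alpha> \<le> \<beta>"
  then obtain \<gamma> where "\<gamma> \<in> monoms n (b + q)" "\<beta> \<le> \<gamma>" "\<not> \<alpha> \<le> \<gamma>"
    using exists_above_not_above[OF assms(1,3,2)] by blast
  then have "0 < (Jmul n ^^ q) (monom_vec \<beta> c') \<gamma>" "(Jmul n ^^ p) (monom_vec \<alpha> c) \<gamma> = 0"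
    using Jpow_monom_vec_pos[OF assms(3,4)] Jpow_monom_vec_eq_0 by auto
  with assms(5,6) \<open>\<gamma> \<in> monoms n (b + q)\<close> show False
    by force
qed

lemma card_monoms_le_Rnz_Jpow_monom_vec_add:
  assumes "\<alpha> \<in> monoms n a" "0 < c" "\<And>\<gamma>. 0 \<le> g \<gamma>" "s \<noteq> 0"
  shows "card (monoms n p) \<le> Rnz n (a + p) (\<lambda>\<gamma>. s * ((Jmul n ^^ p) (monom_vec \<alpha> c) \<gamma> + g \<gamma>))"
proof -
  have "s * ((Jmul n ^^ p) (monom_vec \<alpha> c) \<gamma> + g \<gamma>) \<noteq> 0"
    if "\<gamma> \<in> {\<gamma> \<in> monoms n (a + p). \<alpha> \<le> \<gamma>}" for \<gamma>
    using that Jpow_monom_vec_pos[OF assms(1,2)] assms(3)[of \<gamma>] assms(4) by force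
  then show ?thesis
    using Rnz_ge_card card_monoms_above[OF assms(1)] by (metis (no_types, lifting) mem_Collect_eq subsetI)
qed

lemma Rnz_Jpow_monom_vec_diff_ge:
  assumes "\<alpha> \<in> monoms n a" "\<beta> \<in> monoms n b" "\<alpha> \<le> \<beta>" "0 < c" "a + p = b + q"
  shows "card (monoms n p) - card (monoms n q)
    \<le> Rnz n (a + p) (\<lambda>\<gamma>. (Jmul n ^^ p) (monom_vec \<alpha> c) \<gamma> - (Jmul n ^^ q) (monom_vec \<beta> c') \<gamma>)"
proof -
  define S where "S = {\<gamma> \<in> monoms n (a + p). \<alpha> \<le> \<gamma>}"
  define T where "T = {\<gamma> \<in> monoms n (b + q). \<beta> \<le> \<gamma>}"
  have "T \<subseteq> S"
    using assms(3,5) by (auto simp: S_def T_def)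
  then have "card (S - T) = card (monoms n p) - card (monoms n q)"
    using card_monoms_above[OF assms(1)] card_monoms_above[OF assms(2)] finite_monoms
    by (simp add: S_def T_def card_Diff_subset)
  moreover have "card (S - T) \<le> Rnz n (a + p)
      (\<lambda>\<gamma>. (Jmul n ^^ p) (monom_vec \<alpha> c) \<gamma> - (Jmul n ^^ q) (monom_vec \<beta> c') \<gamma>)"
  proof (rule Rnz_ge_card)
    show "S - T \<subseteq> monoms n (a + p)"
      by (auto simp: S_def)
    fix \<gamma>
    assume "\<gamma> \<in> S - T"
    then have "0 < (Jmul n ^^ p) (monom_vec \<alpha> c) \<gamma>" "(Jmul n ^^ q) (monom_vec \<beta> c') \<gamma> = 0"
      using Jpow_monom_vec_pos[OF assms(1,4)] Jpow_monom_vec_eq_0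
      by (auto simp: S_def T_def assms(5)[symmetric])
    then show "(Jmul n ^^ p) (monom_vec \<alpha> c) \<gamma> - (Jmul n ^^ q) (monom_vec \<beta> c') \<gamma> \<noteq> 0"
      by simp
  qed
  ultimately show ?thesis
    by simp
qed

lemma Jmul_monom_vec_minus_adjacent_nonneg:
  fixes \<alpha> :: "nat \<Rightarrow> nat" and j n :: nat and c c' :: real
  defines "P \<equiv> \<lambda>\<delta>. Jmul n (monom_vec \<alpha> c) \<delta> - monom_vec (\<alpha>(j := \<alpha> j + 1)) c' \<delta>"
  assumes "\<alpha> \<in> monoms n a" "j < n" "0 \<le> c"
    and "0 \<le> (Jmul n ^^ p) P (\<alpha>(j := \<alpha> j + Suc p))"
  shows "0 \<le> P \<delta>"
proof -
  define \<beta> where "\<beta> = \<alpha>(j := \<alpha> j + 1)"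
  let ?\<gamma>0 = "\<alpha>(j := \<alpha> j + Suc p)"
  have Jmul_nonneg: "0 \<le> Jmul n (monom_vec \<alpha> c) \<delta>" for \<delta>
    unfolding Jmul_def monom_vec_def using assms(4) by (intro sum_nonneg) simp
  (* P is supported on the exponents \<alpha> + e_i, of which only \<beta> = \<alpha> + e_j lies below \<gamma>0,
    so (J^p P) \<gamma>0 is P \<beta> times a positive number. *)
  have "P \<delta> = monom_vec \<beta> (P \<beta>) \<delta>" if "\<delta> \<le> ?\<gamma>0" for \<delta>
  proof (cases "\<delta> = \<beta>")
    case False
    have "Jmul n (monom_vec \<alpha> c) \<delta> = 0"
    proof (rule ccontr)
      assume "Jmul n (monom_vec \<alpha> c) \<delta> \<noteq> 0"
      then obtain i where i: "i < n" "\<delta> = \<alpha>(i := \<alpha> i + 1)"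
        using Jmul_monom_vec_neq_0 by blast
      with False have "i \<noteq> j"
        by (auto simp: \<beta>_def)
      with i le_funD[OF that, of i] show False
        by simp
    qed
    with False show ?thesis
      by (simp add: P_def \<beta>_def monom_vec_def)
  qed (simp add: monom_vec_def)
  then have "(Jmul n ^^ p) P ?\<gamma>0 = P \<beta> * (Jmul n ^^ p) (monom_vec \<beta> 1) ?\<gamma>0"
    using Jpow_cong_below[where g = "monom_vec \<beta> (P \<beta>)"]
    by (simp add: monom_vec_scale[of \<beta> "P \<beta>"] Jpow_scale)
  moreover have "0 < (Jmul n ^^ p) (monom_vec \<beta> 1) ?\<gamma>0"
  proof (rule Jpow_monom_vec_pos)
    show "\<beta> \<in> monoms n (a + 1)"
      unfolding \<beta>_def by (rule monoms_upd_add[OF assms(2,3)])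
    show "?\<gamma>0 \<in> monoms n (a + 1 + p)"
      using monoms_upd_add[OF assms(2,3), of "Suc p"] by simp
  qed (auto simp: \<beta>_def le_fun_def)
  ultimately have "0 \<le> P \<beta>"
    using assms(5) by (simp add: zero_le_mult_iff)
  with Jmul_nonneg show ?thesis
    by (cases "\<delta> = \<beta>") (auto simp: P_def \<beta>_def monom_vec_def)
qed

lemma Rnz_Jpow_monom_vec_diff_adjacent_ge:
  fixes \<alpha> :: "nat \<Rightarrow> nat" and j n p :: nat and c c' :: real
  defines "v \<equiv> \<lambda>\<gamma>. (Jmul n ^^ Suc p) (monom_vec \<alpha> c) \<gamma>
                    - (Jmul n ^^ p) (monom_vec (\<alpha>(j := \<alpha> j + 1)) c') \<gamma>"
  assumes "\<alpha> \<in> monoms n a" "j < n" "0 < c" "\<forall>\<gamma> \<in> monoms n (a + Suc p). 0 \<le> v \<gamma>"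
  shows "card (monoms n (Suc p)) - 1 \<le> Rnz n (a + Suc p) v"
proof -
  define \<beta> where "\<beta> = \<alpha>(j := \<alpha> j + 1)"
  define P where "P = (\<lambda>\<delta>. Jmul n (monom_vec \<alpha> c) \<delta> - monom_vec \<beta> c' \<delta>)"
  define \<gamma>0 where "\<gamma>0 = \<alpha>(j := \<alpha> j + Suc p)"
  define S where "S = {\<gamma> \<in> monoms n (a + Suc p). \<alpha> \<le> \<gamma>}"
  have v_eq: "v = (Jmul n ^^ p) P"
    by (simp add: v_def P_def \<beta>_def Jpow_diff funpow_Suc_right del: funpow.simps)
  have \<gamma>0: "\<gamma>0 \<in> S"
    using monoms_upd_add[OF assms(2,3), of "Suc p"] by (simp add: S_def \<gamma>0_def le_fun_def)
  have P_nonneg: "0 \<le> P \<delta>" for \<delta>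
    using Jmul_monom_vec_minus_adjacent_nonneg[OF assms(2,3), where c' = c' and p = p]
      \<gamma>0 assms(4,5)
    by (simp add: S_def \<gamma>0_def v_eq P_def \<beta>_def)
  have "v \<gamma> \<noteq> 0" if \<gamma>: "\<gamma> \<in> S - {\<gamma>0}" for \<gamma>
  proof -
    obtain i where i: "i < n" "i \<noteq> j" "\<alpha> i < \<gamma> i"
      using monoms_exists_coord_gt_off[of \<alpha> \<gamma> n "a + Suc p" j "Suc p"] \<gamma> \<gamma>0
      by (auto simp: S_def \<gamma>0_def)
    let ?\<delta> = "\<alpha>(i := \<alpha> i + 1)"
    have "c \<le> Jmul n (monom_vec \<alpha> c) ?\<delta>"
      using Jmul_ge[of "monom_vec \<alpha> c" i n ?\<delta>] i(1) assms(4) by (simp add: monom_vec_def)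
    moreover have "monom_vec \<beta> c' ?\<delta> = 0"
      using i(2) by (auto simp: monom_vec_def \<beta>_def fun_eq_iff dest: spec[of _ i])
    ultimately have "0 < P ?\<delta>"
      using assms(4) by (simp add: P_def)
    moreover have "?\<delta> \<in> monoms n (a + 1)" "?\<delta> \<le> \<gamma>"
      using monoms_upd_add[OF assms(2) i(1), of 1] i \<gamma> by (auto simp: S_def le_fun_def)
    ultimately have "0 < (Jmul n ^^ p) P \<gamma>"
      using Jpow_pos[OF P_nonneg] \<gamma> by (simp add: S_def)
    then show ?thesis
      by (simp add: v_eq)
  qed
  then have "card (S - {\<gamma>0}) \<le> Rnz n (a + Suc p) v"
    by (intro Rnz_ge_card) (auto simp: S_def)
  then show ?thesis
    using \<gamma>0 card_monoms_above[OF assms(2), of "Suc p"] by (simp add: S_def)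
qed

lemma Rnz_Jpow_monom_vec_odd_diff_ge:
  assumes "n \<ge> 2" "\<alpha> \<in> monoms n a" "\<beta> \<in> monoms n b" "0 < c" "0 < c'"
    and "odd (b - a)" "a + p = b + q" "3 \<le> p"
    and "\<forall>\<gamma> \<in> monoms n (a + p).
           0 \<le> (Jmul n ^^ p) (monom_vec \<alpha> c) \<gamma> - (Jmul n ^^ q) (monom_vec \<beta> c') \<gamma>"
  shows "card (monoms n 3) - 1
    \<le> Rnz n (a + p) (\<lambda>\<gamma>. (Jmul n ^^ p) (monom_vec \<alpha> c) \<gamma> - (Jmul n ^^ q) (monom_vec \<beta> c') \<gamma>)"
proof -
  have "\<alpha> \<le> \<beta>"
    using assms(9) by (intro le_if_Jpow_monom_vec_dominates[OF assms(1,2,3,5,7)]) auto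
  have "b = Suc a \<or> q + 3 \<le> p"
    using assms(6,7) by presburger
  then show ?thesis
  proof
    assume "b = Suc a"
    then obtain j where j: "j < n" "\<beta> = \<alpha>(j := \<alpha> j + 1)"
      using monoms_le_Suc_eq_upd[OF assms(2)] assms(3) \<open>\<alpha> \<le> \<beta>\<close> by metis
    have p: "p = Suc q"
      using \<open>b = Suc a\<close> assms(7) by simp
    have "card (monoms n p) - 1 \<le> Rnz n (a + p)
        (\<lambda>\<gamma>. (Jmul n ^^ p) (monom_vec \<alpha> c) \<gamma> - (Jmul n ^^ q) (monom_vec \<beta> c') \<gamma>)"
      using Rnz_Jpow_monom_vec_diff_adjacent_ge[OF assms(2) j(1) assms(4), where c' = c' and p = q]
        assms(9) by (simp add: p j(2))
    then show ?thesis
      using card_monoms_three_le[OF assms(1,8)] by linarith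
  next
    assume "q + 3 \<le> p"
    then show ?thesis
      using Rnz_Jpow_monom_vec_diff_ge[OF assms(2,3) \<open>\<alpha> \<le> \<beta>\<close> assms(4,7), of c']
        card_monoms_gap[OF assms(1)] by fastforce
  qed
qed

theorem lemma5p4:
  fixes n d a b :: nat and ga gb :: "(nat \<Rightarrow> nat) \<Rightarrow> real"
  assumes "n \<ge> 2" "d \<ge> 2" "a < b" "b \<le> d"
    and "is_coeffvec n a ga" "is_coeffvec n b gb"
    and "\<forall>\<alpha>. ga \<alpha> \<ge> 0" "\<forall>\<alpha>. gb \<alpha> \<ge> 0"
    and "Rnz n a ga = 1" "Rnz n b gb = 1"
    and "v = (\<lambda>\<alpha>. (-1) ^ (d - a) * ((Jmul n ^^ (d - a + 1)) ga) \<alpha>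
                 + (-1) ^ (d - b) * ((Jmul n ^^ (d - b + 1)) gb) \<alpha>)"
    and "\<forall>\<alpha>\<in>monoms n (d + 1). v \<alpha> \<ge> 0"
  shows "Rnz n (d + 1) v \<ge> (n + 2 choose 3) - 1"
proof -
  obtain \<alpha> c where \<alpha>: "\<alpha> \<in> monoms n a" "0 < c" and ga: "ga = monom_vec \<alpha> c"
    using coeffvec_eq_monom_vec[OF assms(5,7,9)] by blast
  obtain \<beta> c' where \<beta>: "\<beta> \<in> monoms n b" "0 < c'" and gb: "gb = monom_vec \<beta> c'"
    using coeffvec_eq_monom_vec[OF assms(6,8,10)] by blast
  define p q where "p = d - a + 1" and "q = d - b + 1"
  define A B where "A = (Jmul n ^^ p) ga" and "B = (Jmul n ^^ q) gb"
  have deg: "a + p = d + 1" "a + p = b + q"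
    using assms(3,4) by (auto simp: p_def q_def)
  have v: "v = (\<lambda>\<gamma>. (-1) ^ (d - a) * A \<gamma> + (-1) ^ (d - b) * B \<gamma>)"
    using assms(11) by (simp add: A_def B_def p_def q_def)
  have three: "card (monoms n 3) = n + 2 choose 3"
    using assms(1) by (simp add: card_monoms add.commute)
  consider (same) "even (d - a) = even (d - b)" | (plus_minus) "even (d - a)" "odd (d - b)"
    | (minus_plus) "odd (d - a)" "even (d - b)"
    by blast
  then show ?thesis
  proof cases
    case same
    then have "v = (\<lambda>\<gamma>. (-1) ^ (d - a) * (A \<gamma> + B \<gamma>))"
      by (simp add: v minus_one_power_iff fun_eq_iff)
    moreover have "3 \<le> p"
      using same assms(3,4) unfolding p_def by presburger
    ultimately show ?thesis
      using card_monoms_le_Rnz_Jpow_monom_vec_add[OF \<alpha>, of B "(-1) ^ (d - a)" p]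
        Jpow_nonneg[of gb] assms(8) card_monoms_three_le[OF assms(1)]
      by (force simp: A_def B_def ga three deg)
  next
    case plus_minus
    then have "v = (\<lambda>\<gamma>. A \<gamma> - B \<gamma>)"
      by (simp add: v minus_one_power_iff fun_eq_iff)
    moreover have "odd (b - a)" "3 \<le> p"
      using plus_minus assms(3,4) unfolding p_def by presburger+
    ultimately show ?thesis
      using Rnz_Jpow_monom_vec_odd_diff_ge[OF assms(1) \<alpha>(1) \<beta>(1) \<alpha>(2) \<beta>(2) _ deg(2)] assms(12)
      by (simp add: A_def B_def ga gb three deg)
  next
    case minus_plus
    then have "v = (\<lambda>\<gamma>. B \<gamma> - A \<gamma>)"
      by (simp add: v minus_one_power_iff fun_eq_iff)
    then have "\<forall>\<gamma> \<in> monoms n (b + q). A \<gamma> \<le> B \<gamma>"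
      using assms(12) deg by auto
    then have "\<beta> \<le> \<alpha>"
      using le_if_Jpow_monom_vec_dominates[OF assms(1) \<beta>(1) \<alpha>(1) \<alpha>(2) deg(2)[symmetric]]
      by (simp add: A_def B_def ga gb)
    with not_le_if_degree_less[OF \<alpha>(1) \<beta>(1) assms(3)] show ?thesis
      by contradiction
  qed
qed

end
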